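(* Let $H=(W,F)$ be a connected simple undirected graph with a designated root $r_1\in W$ and a set of terminals $S=\{s_1,\dots,s_k\}\subseteq W\setminus\{r_1\}$ with $k\ge 2$, such that no edge of $H$ joins two terminals. Let $H'$, $H'_1$, $H'_2$, $M_1$, $M_2$ and $g$ be as defined in the context. Then for every set $J$ that is a basis of both $M_1$ and $M_2$, the edge set $g(J)$ is an $S$-wide spanning tree of $H$.
   Context: A spanning tree $T$ of $H$ is $S$-wide if every connected component of $T-r_1$ contains at most one terminal. $H'=(W',F')$ is obtained from $H$ by adding $k-1$ new vertices $r_2,\dots,r_k$ and, for each edge $r_1x\in F$ and each $i\in\{2,\dots,k\}$, a new edge $r_ix$. $H'_1$ is the multigraph obtained from $H'$ by identifying $r_1,\dots,r_k$ into a single vertex (keeping parallel edges), and $H'_2$ is the multigraph obtained from $H'$ by identifying $s_1,\dots,s_k$ into a single vertex (keeping parallel edges and loops); both have edge set $F'$. $M_1$ and $M_2$ are the graphic matroids of $H'_1$ and $H'_2$ on ground set $F'$. Define $f:F'\to F$ by $f(xy)=r_1y$ if $x\in\{r_1,\dots,r_k\}$, $f(xy)=xr_1$ if $y\in\{r_1,\dots,r_k\}$, and $f(xy)=xy$ otherwise; for $J\subseteq F'$, $g(J)=\{f(e):e\in J\}$. *)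

theory Defs
  imports Main
begin

text \<open>A multigraph is given by its edges (of type 'e) and a map ends assigning to
each edge its set of endpoints (a singleton for a loop, a 2-set otherwise).
Parallel edges are distinct edge objects with equal endpoint sets.\<close>

definition has_cycle :: "('e \<Rightarrow> 'u set) \<Rightarrow> 'e set \<Rightarrow> bool" where
  "has_cycle ends J \<longleftrightarrow>
     (\<exists>es vs. length es \<ge> 1 \<and> length vs = length es \<and> distinct es \<and> distinct vs \<and>
        set es \<subseteq> J \<and>
        (\<forall>i < length es. ends (es ! i) = {vs ! i, vs ! ((i + 1) mod length es)}))"

definition graphic_indep :: "'e set \<Rightarrow> ('e \<Rightarrow> 'u set) \<Rightarrow> 'e set \<Rightarrow> bool" where
  "graphic_indep E ends J \<longleftrightarrow> J \<subseteq> E \<and> \<not> has_cycle ends J"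

definition graphic_basis :: "'e set \<Rightarrow> ('e \<Rightarrow> 'u set) \<Rightarrow> 'e set \<Rightarrow> bool" where
  "graphic_basis E ends J \<longleftrightarrow> graphic_indep E ends J \<and>
     (\<forall>J'. graphic_indep E ends J' \<and> J \<subseteq> J' \<longrightarrow> J' = J)"

definition simple_graph :: "'v set \<Rightarrow> 'v set set \<Rightarrow> bool" where
  "simple_graph V E \<longleftrightarrow> finite V \<and> (\<forall>e\<in>E. \<exists>x y. e = {x, y} \<and> x \<noteq> y \<and> x \<in> V \<and> y \<in> V)"

definition reach :: "'v set \<Rightarrow> 'v set set \<Rightarrow> 'v \<Rightarrow> 'v \<Rightarrow> bool" where
  "reach V E x y \<longleftrightarrow> (x, y) \<in> {(a, b). {a, b} \<in> E \<and> a \<in> V \<and> b \<in> V}\<^sup>*"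

definition connected_graph :: "'v set \<Rightarrow> 'v set set \<Rightarrow> bool" where
  "connected_graph V E \<longleftrightarrow> (\<forall>x\<in>V. \<forall>y\<in>V. reach V E x y)"

definition spanning_tree :: "'v set \<Rightarrow> 'v set set \<Rightarrow> 'v set set \<Rightarrow> bool" where
  "spanning_tree V E T \<longleftrightarrow> T \<subseteq> E \<and> connected_graph V T \<and> \<not> has_cycle id T"

text \<open>T - r: delete vertex r and its incident edges. S-wide: each component of T - r
contains at most one terminal, i.e. no two distinct terminals are connected in T - r.\<close>
definition S_wide :: "'v set \<Rightarrow> 'v set set \<Rightarrow> 'v \<Rightarrow> 'v set \<Rightarrow> 'v set set \<Rightarrow> bool" where
  "S_wide V E r S T \<longleftrightarrow> spanning_tree V E T \<and>
     (\<forall>s\<in>S. \<forall>s'\<in>S. s \<noteq> s' \<longrightarrow> \<not> reach (V - {r}) {e \<in> T. r \<notin> e} s s')"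

text \<open>Vertices of H' live in 'v + nat: Inl v is an original vertex, Inr i is the new r_i
(2 \<le> i \<le> k).\<close>

definition Hp_edges :: "'v set set \<Rightarrow> 'v \<Rightarrow> nat \<Rightarrow> ('v + nat) set set" where
  "Hp_edges F r1 k = (\<lambda>e. Inl ` e) ` F \<union>
     {{Inr i, Inl x} | i x. i \<in> {2..k} \<and> {r1, x} \<in> F}"

text \<open>H'_1: identify r_1,...,r_k.\<close>
definition ends1 :: "'v \<Rightarrow> ('v + nat) set \<Rightarrow> ('v + nat) set" where
  "ends1 r1 e = (\<lambda>u. case u of Inl v \<Rightarrow> Inl v | Inr _ \<Rightarrow> Inl r1) ` e"

text \<open>H'_2: identify s_1,...,s_k.\<close>
definition ends2 :: "(nat \<Rightarrow> 'v) \<Rightarrow> nat \<Rightarrow> ('v + nat) set \<Rightarrow> ('v + nat) set" where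
  "ends2 s k e = (\<lambda>u. if u \<in> Inl ` s ` {1..k} then Inl (s 1) else u) ` e"

text \<open>The map f : F' \<rightarrow> F (r_i x \<mapsto> r_1 x, other edges unchanged) and g(J) = f ` J.\<close>
definition fmap :: "'v \<Rightarrow> ('v + nat) set \<Rightarrow> 'v set" where
  "fmap r1 e = (\<lambda>u. case u of Inl v \<Rightarrow> v | Inr _ \<Rightarrow> r1) ` e"

definition gmap :: "'v \<Rightarrow> ('v + nat) set set \<Rightarrow> 'v set set" where
  "gmap r1 J = fmap r1 ` J"

end

theory Submission
  imports Defs "HOL-Library.Transitive_Closure_Table"
begin

(* g(J) is a forest: a cycle of g(J) lifts along f to a cycle of J in H'_1, where each r_i x is
   parallel to r_1 x.  It is spanning and connected: as a basis of M_1, J spans every edge of H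
   in H'_1, and projecting H'_1-walks along f gives walks of g(J).  It is S-wide: the edges of
   g(J) avoiding r_1 are edges of J, so a path of g(J) - r_1 between two terminals, cut at the
   first terminal after its start, becomes a cycle of J once the terminals are identified,
   contradicting independence of J in M_2. *)

definition adjacency :: "('e \<Rightarrow> 'u set) \<Rightarrow> 'e set \<Rightarrow> ('u \<times> 'u) set" where
  "adjacency ends J = {(u, v). \<exists>e\<in>J. ends e = {u, v}}"

lemma sym_adjacency: "sym (adjacency ends J)"
  unfolding sym_def adjacency_def by (auto simp: insert_commute)

lemma rtrancl_map_hom:
  assumes "(u, v) \<in> R\<^sup>*" "\<And>x y. (x, y) \<in> R \<Longrightarrow> (h x, h y) \<in> Q\<^sup>*"
  shows "(h u, h v) \<in> Q\<^sup>*"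
  using assms(1) by (induction rule: rtrancl_induct) (auto dest: assms(2) intro: rtrancl_trans)

lemma rtrancl_around_cycle:
  assumes "m < n" "\<And>i. i < n \<Longrightarrow> i \<noteq> m \<Longrightarrow> (f i, f (Suc i mod n)) \<in> R"
  shows "(f (Suc m mod n), f m) \<in> R\<^sup>*"
proof -
  define g where "g t = f ((Suc m + t) mod n)" for t
  have "(g t, g (Suc t)) \<in> R" if "t < n - 1" for t
  proof -
    have "(Suc m + t) mod n \<noteq> m"
      using that assms(1) by (cases "Suc m + t < n") (auto simp: mod_if)
    with assms(2)[of "(Suc m + t) mod n"] assms(1) show ?thesis
      by (simp add: g_def mod_Suc_eq)
  qed
  then have "(g 0, g (n - 1)) \<in> R ^^ (n - 1)"
    unfolding relpow_fun_conv by blast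
  then have "(g 0, g (n - 1)) \<in> R\<^sup>*"
    by (rule relpow_imp_rtrancl)
  moreover have "g (n - 1) = f m"
    using assms(1) by (simp add: g_def)
  ultimately show ?thesis
    by (simp add: g_def)
qed

lemma has_cycle_insert_connects:
  assumes "has_cycle ends (insert e J)" "\<not> has_cycle ends J"
  shows "\<exists>u v. ends e = {u, v} \<and> (u, v) \<in> (adjacency ends J)\<^sup>*"
proof -
  obtain es vs where c: "length es \<ge> 1" "length vs = length es" "distinct es" "distinct vs"
    "set es \<subseteq> insert e J"
    "\<forall>i < length es. ends (es ! i) = {vs ! i, vs ! ((i + 1) mod length es)}"
    using assms(1) unfolding has_cycle_def by blast
  have "e \<in> set es"
  proof (rule ccontr)
    assume "e \<notin> set es"
    with c have "has_cycle ends J"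
      unfolding has_cycle_def by (intro exI[of _ es] exI[of _ vs]) auto
    with assms(2) show False ..
  qed
  then obtain m where m: "m < length es" "es ! m = e"
    by (auto simp: in_set_conv_nth)
  have "(vs ! i, vs ! (Suc i mod length es)) \<in> adjacency ends J"
    if "i < length es" "i \<noteq> m" for i
  proof -
    have "es ! i \<noteq> e"
      using that m(1) c(3) unfolding m(2)[symmetric] by (simp add: nth_eq_iff_index_eq)
    then have "es ! i \<in> J"
      using c(5) nth_mem[OF that(1)] by blast
    then show ?thesis
      using c(6) that unfolding adjacency_def by auto
  qed
  from rtrancl_around_cycle[where f = "(!) vs", OF m(1) this]
  have "(vs ! (Suc m mod length es), vs ! m) \<in> (adjacency ends J)\<^sup>*" .
  moreover have "ends e = {vs ! (Suc m mod length es), vs ! m}"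
    using c(6) m by auto
  ultimately show ?thesis by blast
qed

lemma graphic_basis_spans:
  assumes "graphic_basis E ends J" "e \<in> E" "ends e = {u, v}"
  shows "(u, v) \<in> (adjacency ends J)\<^sup>*"
proof (cases "e \<in> J")
  case True
  then show ?thesis
    using assms(3) unfolding adjacency_def by (auto intro!: r_into_rtrancl)
next
  case False
  have indep: "J \<subseteq> E" "\<not> has_cycle ends J"
    and maximal: "\<And>J'. graphic_indep E ends J' \<Longrightarrow> J \<subseteq> J' \<Longrightarrow> J' = J"
    using assms(1) unfolding graphic_basis_def graphic_indep_def by simp_all
  have "\<not> graphic_indep E ends (insert e J)"
    using maximal[of "insert e J"] False by auto
  then have "has_cycle ends (insert e J)"
    using indep(1) assms(2) unfolding graphic_indep_def by simp
  with indep(2) obtain u' v' where "ends e = {u', v'}" "(u', v') \<in> (adjacency ends J)\<^sup>*"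
    by (metis has_cycle_insert_connects)
  moreover have "sym ((adjacency ends J)\<^sup>*)"
    by (rule sym_rtrancl) (rule sym_adjacency)
  ultimately show ?thesis
    using assms(3) by (auto simp: doubleton_eq_iff sym_def)
qed

lemma has_cycle_lift:
  assumes "has_cycle ends (f ` J)" "inj h" "\<And>e. e \<in> J \<Longrightarrow> ends' e = h ` ends (f e)"
  shows "has_cycle ends' J"
proof -
  obtain es vs where c: "length es \<ge> 1" "length vs = length es" "distinct es" "distinct vs"
    "set es \<subseteq> f ` J"
    "\<forall>i < length es. ends (es ! i) = {vs ! i, vs ! ((i + 1) mod length es)}"
    using assms(1) unfolding has_cycle_def by blast
  let ?lift = "inv_into J f"
  have lift: "?lift t \<in> J" "ends' (?lift t) = h ` ends t" if "t \<in> set es" for t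
    using that c(5) assms(3) by (auto simp: inv_into_into f_inv_into_f)
  show ?thesis
    unfolding has_cycle_def
  proof (intro exI conjI)
    show "distinct (map ?lift es)"
      using c(3,5) by (simp add: distinct_map inj_on_inv_into)
    show "distinct (map h vs)"
      using c(4) assms(2) by (simp add: distinct_map inj_on_subset[OF assms(2)])
    show "\<forall>i < length (map ?lift es). ends' (map ?lift es ! i) =
        {map h vs ! i, map h vs ! ((i + 1) mod length (map ?lift es))}"
    proof (intro allI impI)
      fix i
      assume "i < length (map ?lift es)"
      moreover have "Suc i mod length es < length vs"
        using c(1,2) by (simp add: Suc_le_eq)
      ultimately show "ends' (map ?lift es ! i) =
          {map h vs ! i, map h vs ! ((i + 1) mod length (map ?lift es))}"
        using c(2,6) lift by simp
    qed
  qed (use c lift in auto)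
qed

lemma rtrancl_first_hit_path:
  assumes "(a, b) \<in> R\<^sup>*" "b \<in> A" "a \<noteq> b"
  obtains ys c where "rtrancl_path (\<lambda>x y. (x, y) \<in> R) a (ys @ [c]) c"
    "distinct (a # ys @ [c])" "c \<in> A" "set ys \<inter> A = {}"
proof -
  have "(\<lambda>x y. (x, y) \<in> R)\<^sup>*\<^sup>* a b"
    using assms(1) by (simp add: rtranclp_rtrancl_eq)
  then obtain xs0 where "rtrancl_path (\<lambda>x y. (x, y) \<in> R) a xs0 b"
    unfolding rtranclp_eq_rtrancl_path by blast
  then obtain xs where xs: "rtrancl_path (\<lambda>x y. (x, y) \<in> R) a xs b" "distinct (a # xs)"
    by (rule rtrancl_path_distinct)
  have "xs \<noteq> []"
    using xs(1) assms(3) by (auto elim: rtrancl_path.cases)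
  then have "b \<in> set xs"
    using rtrancl_path_last[OF xs(1)] by auto
  then obtain ys c zs where split: "xs = ys @ c # zs" "c \<in> A" "\<forall>y\<in>set ys. y \<notin> A"
    using assms(2) split_list_first_prop[of xs "\<lambda>x. x \<in> A"] by blast
  from xs(1) obtain "rtrancl_path (\<lambda>x y. (x, y) \<in> R) a (ys @ [c]) c"
    unfolding split(1) by (rule rtrancl_path_appendE)
  moreover have "distinct (a # ys @ [c])"
    using xs(2) unfolding split(1) by auto
  ultimately show thesis
    using that split(2,3) by blast
qed

lemma has_cycle_identify_path_ends:
  assumes "(a, b) \<in> (adjacency ends J)\<^sup>*" "a \<in> A" "b \<in> A" "a \<noteq> b"
    and kernel: "\<And>x y. q x = q y \<longleftrightarrow> x = y \<or> x \<in> A \<and> y \<in> A"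
  shows "has_cycle (\<lambda>e. q ` ends e) J"
proof -
  obtain ys c where path: "rtrancl_path (\<lambda>x y. (x, y) \<in> adjacency ends J) a (ys @ [c]) c"
    and dist: "distinct (a # ys @ [c])" and "c \<in> A" and ys: "set ys \<inter> A = {}"
    using rtrancl_first_hit_path[OF assms(1,3,4)] .
  define ps where "ps = a # ys @ [c]"
  define n where "n = Suc (length ys)"
  have ps: "distinct ps" "length ps = Suc n"
    using dist by (simp_all add: ps_def n_def)
  have edge: "\<exists>e. e \<in> J \<and> ends e = {ps ! i, ps ! Suc i}" if "i < n" for i
    using rtrancl_path_nth[OF path, of i] that unfolding adjacency_def ps_def n_def by auto
  define es where "es i = (SOME e. e \<in> J \<and> ends e = {ps ! i, ps ! Suc i})" for i
  have es: "es i \<in> J \<and> ends (es i) = {ps ! i, ps ! Suc i}" if "i < n" for i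
    unfolding es_def using edge[OF that] by (rule someI_ex)
  have ps_in_A: "ps ! i \<in> A \<longleftrightarrow> i = 0" if "i < n" for i
  proof (cases i)
    case (Suc j)
    then have "j < length ys" "ps ! i = ys ! j"
      using that by (simp_all add: ps_def n_def nth_append)
    then have "ps ! i \<in> set ys"
      by simp
    with ys Suc show ?thesis
      by blast
  qed (simp add: ps_def \<open>a \<in> A\<close>)
  have closing: "q (ps ! n) = q (ps ! 0)"
    using kernel \<open>a \<in> A\<close> \<open>c \<in> A\<close> by (simp add: ps_def n_def nth_append)
  let ?es = "map es [0..<n]" and ?vs = "map (\<lambda>i. q (ps ! i)) [0..<n]"
  show ?thesis
    unfolding has_cycle_def
  proof (intro exI conjI)
    show "distinct ?es"
      unfolding distinct_map
    proof (intro conjI inj_onI)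
      fix i j
      assume "i \<in> set [0..<n]" "j \<in> set [0..<n]" "es i = es j"
      then have "i < n" "j < n"
        by simp_all
      with \<open>es i = es j\<close> have "{ps ! i, ps ! Suc i} = {ps ! j, ps ! Suc j}"
        using es by metis
      with \<open>i < n\<close> \<open>j < n\<close> show "i = j"
        using ps by (auto simp: doubleton_eq_iff nth_eq_iff_index_eq)
    qed simp
    show "distinct ?vs"
      unfolding distinct_map
    proof (intro conjI inj_onI)
      fix i j
      assume "i \<in> set [0..<n]" "j \<in> set [0..<n]" "q (ps ! i) = q (ps ! j)"
      then have "i < n" "j < n" "ps ! i = ps ! j \<or> ps ! i \<in> A \<and> ps ! j \<in> A"
        by (simp_all only: kernel set_upt atLeastLessThan_iff)
      then show "i = j"
        using ps ps_in_A[of i] ps_in_A[of j] by (auto simp: nth_eq_iff_index_eq)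
    qed simp
    show "set ?es \<subseteq> J"
      using es by auto
    show "\<forall>i < length ?es. q ` ends (?es ! i) = {?vs ! i, ?vs ! ((i + 1) mod length ?es)}"
    proof (intro allI impI)
      fix i
      assume "i < length ?es"
      then have "i < n" by simp
      moreover have "?vs ! (Suc i mod n) = q (ps ! Suc i)"
      proof (cases "Suc i < n")
        case False
        with \<open>i < n\<close> have "Suc i = n"
          by simp
        with closing show ?thesis
          by simp
      qed simp
      ultimately show "q ` ends (?es ! i) = {?vs ! i, ?vs ! ((i + 1) mod length ?es)}"
        using es by simp
    qed
  qed (simp_all add: n_def)
qed

lemma reach_imp_adjacency: "reach V E x y \<Longrightarrow> (x, y) \<in> (adjacency id E)\<^sup>*"
  unfolding reach_def adjacency_def by (erule rtrancl_mono[THEN subsetD, rotated]) auto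

lemma adjacency_imp_reach:
  assumes "simple_graph V F" "E \<subseteq> F" "(x, y) \<in> (adjacency id E)\<^sup>*"
  shows "reach V E x y"
proof -
  have "{a, b} \<subseteq> V" if "{a, b} \<in> F" for a b
    using assms(1) that unfolding simple_graph_def by (metis insert_subset empty_subsetI)
  then have "adjacency id E \<subseteq> {(a, b). {a, b} \<in> E \<and> a \<in> V \<and> b \<in> V}"
    using assms(2) unfolding adjacency_def by auto
  then show ?thesis
    using assms(3) rtrancl_mono unfolding reach_def by blast
qed

lemma connected_graph_if_edges_reachable:
  assumes "connected_graph V E" "\<And>a b. {a, b} \<in> E \<Longrightarrow> reach V T a b"
  shows "connected_graph V T"
  unfolding connected_graph_def
proof (intro ballI)
  fix x y
  assume "x \<in> V" "y \<in> V"
  then have "(x, y) \<in> {(a, b). {a, b} \<in> E \<and> a \<in> V \<and> b \<in> V}\<^sup>*"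
    using assms(1) unfolding connected_graph_def reach_def by blast
  then have "(id x, id y) \<in> {(a, b). {a, b} \<in> T \<and> a \<in> V \<and> b \<in> V}\<^sup>*"
    by (rule rtrancl_map_hom) (use assms(2) in \<open>auto simp: reach_def\<close>)
  then show "reach V T x y"
    by (simp add: reach_def)
qed

lemma ends1_eq: "ends1 r1 e = Inl ` fmap r1 e"
  unfolding ends1_def fmap_def image_image by (rule image_cong) (auto split: sum.splits)

lemma fmap_Inl [simp]: "fmap r1 (Inl ` t) = t"
  unfolding fmap_def image_image by simp

lemma fmap_Inr_Inl [simp]: "fmap r1 {Inr i, Inl x} = {r1, x}"
  unfolding fmap_def by simp

lemma gmap_subset: "J \<subseteq> Hp_edges F r1 k \<Longrightarrow> gmap r1 J \<subseteq> F"
  unfolding gmap_def Hp_edges_def by auto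

lemma Inl_image_mem_if_avoids_root:
  "J \<subseteq> Hp_edges F r1 k \<Longrightarrow> t \<in> gmap r1 J \<Longrightarrow> r1 \<notin> t \<Longrightarrow> Inl ` t \<in> J"
  unfolding gmap_def Hp_edges_def by auto

lemma adjacency_ends1_projl:
  assumes "(x, y) \<in> adjacency (ends1 r1) J"
  shows "(projl x, projl y) \<in> adjacency id (gmap r1 J)"
proof -
  obtain e where e: "e \<in> J" "Inl ` fmap r1 e = {x, y}"
    using assms unfolding adjacency_def ends1_eq by blast
  have "fmap r1 e = {projl x, projl y}"
    using arg_cong[OF e(2), of "image projl"] by (simp add: image_image)
  with e(1) show ?thesis
    unfolding adjacency_def gmap_def by auto
qed

lemma gmap_acyclic: "\<not> has_cycle (ends1 r1) J \<Longrightarrow> \<not> has_cycle id (gmap r1 J)"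
  unfolding gmap_def using has_cycle_lift[of id "fmap r1" J Inl "ends1 r1"] by (auto simp: ends1_eq)

lemma gmap_connected:
  fixes J :: "('v + nat) set set"
  assumes "simple_graph W F" "connected_graph W F" "graphic_basis (Hp_edges F r1 k) (ends1 r1) J"
  shows "connected_graph W (gmap r1 J)"
proof (rule connected_graph_if_edges_reachable[OF assms(2)])
  have "J \<subseteq> Hp_edges F r1 k"
    using assms(3) unfolding graphic_basis_def graphic_indep_def by simp
  then have T: "gmap r1 J \<subseteq> F"
    by (rule gmap_subset)
  fix a b
  assume "{a, b} \<in> F"
  then have "Inl ` {a, b} \<in> Hp_edges F r1 k"
    unfolding Hp_edges_def by (intro UnI1 imageI)
  moreover have "ends1 r1 (Inl ` {a, b}) = {Inl a, Inl b}"
    unfolding ends1_eq fmap_Inl by simp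
  ultimately have lifted: "(Inl a, Inl b) \<in> (adjacency (ends1 r1) J)\<^sup>*"
    by (rule graphic_basis_spans[OF assms(3)])
  have project: "(projl x, projl y) \<in> (adjacency id (gmap r1 J))\<^sup>*"
    if "(x, y) \<in> adjacency (ends1 r1) J" for x y
    using adjacency_ends1_projl[OF that] by (rule r_into_rtrancl)
  from rtrancl_map_hom[where h = "projl :: 'v + nat \<Rightarrow> 'v", OF lifted project]
  have "(a, b) \<in> (adjacency id (gmap r1 J))\<^sup>*"
    by simp
  then show "reach W (gmap r1 J) a b"
    by (rule adjacency_imp_reach[OF assms(1) T])
qed

lemma gmap_separates_terminals:
  fixes J :: "('v + nat) set set"
  assumes "J \<subseteq> Hp_edges F r1 k" "\<not> has_cycle (ends2 s k) J" "1 \<le> k"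
    and "a \<in> s ` {1..k}" "b \<in> s ` {1..k}" "a \<noteq> b"
  shows "\<not> reach (W - {r1}) {t \<in> gmap r1 J. r1 \<notin> t} a b"
proof
  assume "reach (W - {r1}) {t \<in> gmap r1 J. r1 \<notin> t} a b"
  then have avoiding: "(a, b) \<in> (adjacency id {t \<in> gmap r1 J. r1 \<notin> t})\<^sup>*"
    by (rule reach_imp_adjacency)
  have lift: "(Inl x, Inl y) \<in> (adjacency id J)\<^sup>*"
    if "(x, y) \<in> adjacency id {t \<in> gmap r1 J. r1 \<notin> t}" for x y
  proof -
    have "{x, y} \<in> gmap r1 J" "r1 \<notin> {x, y}"
      using that unfolding adjacency_def by auto
    then have "Inl ` {x, y} \<in> J"
      by (rule Inl_image_mem_if_avoids_root[OF assms(1)])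
    then show ?thesis
      unfolding adjacency_def by (auto intro!: r_into_rtrancl)
  qed
  define A :: "('v + nat) set" where "A = Inl ` s ` {1..k}"
  define q where "q u = (if u \<in> A then Inl (s 1) else u)" for u
  have "Inl (s 1) \<in> A"
    using assms(3) by (auto simp: A_def)
  then have kernel: "q x = q y \<longleftrightarrow> x = y \<or> x \<in> A \<and> y \<in> A" for x y
    by (auto simp: q_def)
  have terminals: "Inl a \<in> A" "Inl b \<in> A" "Inl a \<noteq> Inl b"
    using assms(4-6) by (auto simp: A_def)
  have "has_cycle (\<lambda>e. q ` id e) J"
    by (rule has_cycle_identify_path_ends[OF rtrancl_map_hom[OF avoiding lift] terminals kernel])
  moreover have "ends2 s k = (\<lambda>e. q ` id e)"
    by (simp add: fun_eq_iff ends2_def q_def A_def)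
  ultimately show False
    using assms(2) by simp
qed

theorem lemma7:
  fixes W :: "'v set" and F :: "'v set set" and r1 :: 'v
    and s :: "nat \<Rightarrow> 'v" and k :: nat and J :: "('v + nat) set set"
  assumes "simple_graph W F"
    and "connected_graph W F"
    and "r1 \<in> W"
    and "k \<ge> 2"
    and "inj_on s {1..k}"
    and "s ` {1..k} \<subseteq> W - {r1}"
    and "\<forall>i\<in>{1..k}. \<forall>j\<in>{1..k}. {s i, s j} \<notin> F"
    and "graphic_basis (Hp_edges F r1 k) (ends1 r1) J"
    and "graphic_basis (Hp_edges F r1 k) (ends2 s k) J"
  shows "S_wide W F r1 (s ` {1..k}) (gmap r1 J)"
proof -
  have J: "J \<subseteq> Hp_edges F r1 k"
    and acyclic1: "\<not> has_cycle (ends1 r1) J" and acyclic2: "\<not> has_cycle (ends2 s k) J"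
    using assms(8,9) unfolding graphic_basis_def graphic_indep_def by simp_all
  have "spanning_tree W F (gmap r1 J)"
    unfolding spanning_tree_def
    using gmap_subset[OF J] gmap_connected[OF assms(1,2,8)] gmap_acyclic[OF acyclic1] by blast
  moreover have "\<not> reach (W - {r1}) {t \<in> gmap r1 J. r1 \<notin> t} a b"
    if "a \<in> s ` {1..k}" "b \<in> s ` {1..k}" "a \<noteq> b" for a b
    using assms(4) by (intro gmap_separates_terminals[OF J acyclic2 _ that]) simp
  ultimately show ?thesis
    unfolding S_wide_def by blast
qed

end
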